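(* For every integer $t\ge 1$ and every integer $r\ge 3$, $\mathrm{ex}(n,K_r,F_t)=O(n)$ as $n\to\infty$.
   Context: For graphs $H$ and $F$, $\mathrm{ex}(n,H,F)$ is the maximum number of (not necessarily induced) copies of $H$ in an $n$-vertex graph containing no subgraph isomorphic to $F$. The $t$-fan $F_t$ has vertices $u,v_1,\dots,v_t,w_1,\dots,w_t$ and edges $uv_i,uw_i,v_iw_i$ for $1\le i\le t$ ($t$ triangles sharing one vertex). $K_r$ is the complete graph on $r$ vertices. *)

theory Defs
  imports "HOL-Analysis.Analysis" "HOL-Library.Landau_Symbols"
begin

definition simple_graph_on :: "nat \<Rightarrow> nat set set \<Rightarrow> bool" where
  "simple_graph_on n E \<longleftrightarrow> (\<forall>e\<in>E. card e = 2 \<and> e \<subseteq> {..<n})"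

definition contains_subgraph :: "nat \<Rightarrow> nat set set \<Rightarrow> 'b set \<Rightarrow> 'b set set \<Rightarrow> bool" where
  "contains_subgraph n E VH EH \<longleftrightarrow>
     (\<exists>f. inj_on f VH \<and> f ` VH \<subseteq> {..<n} \<and> (\<forall>e\<in>EH. f ` e \<in> E))"

(* The t-fan F_t: centre u = 0, v_i = 2i-1, w_i = 2i for 1 <= i <= t. *)
definition fan_vertices :: "nat \<Rightarrow> nat set" where
  "fan_vertices t = {0..2*t}"

definition fan_edges :: "nat \<Rightarrow> nat set set" where
  "fan_edges t = (\<Union>i\<in>{1..t}. {{0, 2*i-1}, {0, 2*i}, {2*i-1, 2*i}})"

definition num_Kr :: "nat \<Rightarrow> nat \<Rightarrow> nat set set \<Rightarrow> nat" where
  "num_Kr r n E = card {S. S \<subseteq> {..<n} \<and> card S = r \<and>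
                           (\<forall>x\<in>S. \<forall>y\<in>S. x \<noteq> y \<longrightarrow> {x, y} \<in> E)}"

definition ex_Kr_Ft :: "nat \<Rightarrow> nat \<Rightarrow> nat \<Rightarrow> nat" where
  "ex_Kr_Ft n r t = Max {num_Kr r n E | E. simple_graph_on n E \<and>
                           \<not> contains_subgraph n E (fan_vertices t) (fan_edges t)}"

end

theory Submission
  imports Defs
begin

(* If G has no t-fan, then in the link of any vertex y (the edges inside the neighbourhood of y)
   there is no matching of t edges, so the 2k < 2t vertices of a maximal matching form a cover C y
   of that link.  In a clique S, every two vertices of S - {z} span an edge of the link of z, hence
   at most one vertex of S lies outside insert z (C z).  This forces every clique with at least three
   vertices into ball2 C x for one of its own vertices x, a set whose size depends on t only, so
   each vertex accounts for a bounded number of cliques. *)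

definition indexed_matching :: "'a set set \<Rightarrow> nat \<Rightarrow> (nat \<Rightarrow> 'a) \<Rightarrow> bool" where
  "indexed_matching E k g \<longleftrightarrow> inj_on g {..<2*k} \<and> (\<forall>i<k. {g (2*i), g (2*i+1)} \<in> E)"

lemma indexed_matching_mono:
  assumes "indexed_matching E k g" "j \<le> k" "E \<subseteq> E'"
  shows "indexed_matching E' j g"
  using assms unfolding indexed_matching_def by (auto intro: inj_on_subset)

lemma indexed_matching_snoc:
  assumes g: "indexed_matching E k g" and "p \<noteq> q" and disj: "{p, q} \<inter> g ` {..<2*k} = {}"
  defines "g' \<equiv> g(2*k := p, 2*k+1 := q)"
  shows "indexed_matching (insert {p, q} E) (Suc k) g'"
    and "g' ` {..<2*k} = g ` {..<2*k}"
proof -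
  show image: "g' ` {..<2*k} = g ` {..<2*k}"
    unfolding g'_def by (intro image_cong) auto
  have "inj_on g' {..<2*k}"
    using g unfolding indexed_matching_def g'_def by (simp add: inj_on_def)
  moreover have "g' (2*k) = p" "g' (2*k+1) = q"
    by (simp_all add: g'_def)
  moreover have "{..<2 * Suc k} = insert (2*k+1) (insert (2*k) {..<2*k})"
    by auto
  ultimately have "inj_on g' {..<2 * Suc k}"
    using \<open>p \<noteq> q\<close> disj image by (simp add: insert_Diff_if)
  moreover have "{g' (2*i), g' (2*i+1)} \<in> insert {p, q} E" if "i < Suc k" for i
    using that g unfolding indexed_matching_def g'_def by (cases "i = k") auto
  ultimately show "indexed_matching (insert {p, q} E) (Suc k) g'"
    unfolding indexed_matching_def by blast
qed

lemma maximal_indexed_matching: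
  assumes "finite E" "\<forall>e\<in>E. card e = 2"
  shows "\<exists>k g. indexed_matching E k g \<and> (\<forall>e\<in>E. e \<inter> g ` {..<2*k} \<noteq> {})"
  using assms
proof (induction E rule: finite_induct)
  case empty
  show ?case by (intro exI[of _ 0]) (simp add: indexed_matching_def)
next
  case (insert e E)
  then obtain k g where g: "indexed_matching E k g" and cover: "\<forall>e\<in>E. e \<inter> g ` {..<2*k} \<noteq> {}"
    by auto
  show ?case
  proof (cases "e \<inter> g ` {..<2*k} = {}")
    case True
    obtain p q where e: "e = {p, q}" "p \<noteq> q"
      using insert.prems card_2_iff by (metis insertI1)
    let ?g = "g(2*k := p, 2*k+1 := q)"
    have "indexed_matching (insert e E) (Suc k) ?g" and same: "?g ` {..<2*k} = g ` {..<2*k}"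
      using indexed_matching_snoc[OF g \<open>p \<noteq> q\<close>] True e by simp_all
    moreover have "\<forall>e'\<in>insert e E. e' \<inter> ?g ` {..<2 * Suc k} \<noteq> {}"
    proof
      fix e' assume "e' \<in> insert e E"
      then consider "e' = e" | "e' \<in> E" by blast
      then show "e' \<inter> ?g ` {..<2 * Suc k} \<noteq> {}"
      proof cases
        case 1
        have "p \<in> ?g ` {..<2 * Suc k}" by (rule image_eqI[of _ _ "2*k"]) auto
        then show ?thesis using 1 e by auto
      next
        case 2
        have "?g ` {..<2*k} \<subseteq> ?g ` {..<2 * Suc k}" by (rule image_mono) auto
        moreover have "e' \<inter> g ` {..<2*k} \<noteq> {}" using cover 2 by blast
        ultimately show ?thesis unfolding same by blast
      qed
    qed
    ultimately show ?thesis
      by blast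
  next
    case False
    have "indexed_matching (insert e E) k g"
      using g by (rule indexed_matching_mono) auto
    then show ?thesis
      using False cover by (intro exI[of _ k] exI[of _ g] conjI) auto
  qed
qed

definition link :: "'a set set \<Rightarrow> 'a \<Rightarrow> 'a set set" where
  "link E y = {e \<in> E. \<forall>z\<in>e. {y, z} \<in> E}"

lemma fan_of_link_matching:
  assumes "t \<ge> 1" and G: "simple_graph_on n E" and g: "indexed_matching (link E y) t g"
  shows "contains_subgraph n E (fan_vertices t) (fan_edges t)"
proof -
  have edge: "{g (2*i), g (2*i+1)} \<in> E" "{y, g (2*i)} \<in> E" "{y, g (2*i+1)} \<in> E" if "i < t" for i
    using g that unfolding indexed_matching_def link_def by auto
  have "{y, g j} \<in> E" if "j < 2*t" for j
  proof -
    have "j = 2 * (j div 2) \<or> j = 2 * (j div 2) + 1" by presburger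
    then show ?thesis using edge(2,3)[of "j div 2"] that by auto
  qed
  then have "y \<notin> g ` {..<2*t}" "y < n" "g ` {..<2*t} \<subseteq> {..<n}"
    using G \<open>t \<ge> 1\<close> unfolding simple_graph_on_def by (force simp: card_insert_if)+
  define f where "f j = (case j of 0 \<Rightarrow> y | Suc j \<Rightarrow> g j)" for j
  have "f \<circ> Suc = g" by (simp add: f_def fun_eq_iff)
  then have image: "f ` Suc ` {..<2*t} = g ` {..<2*t}"
    by (metis image_comp)
  have vertices: "fan_vertices t = insert 0 (Suc ` {..<2*t})"
    unfolding fan_vertices_def atLeast0AtMost lessThan_Suc_atMost[symmetric] by (rule lessThan_Suc_eq_insert_0)
  have "inj_on f (Suc ` {..<2*t})"
    using g \<open>f \<circ> Suc = g\<close> comp_inj_on_iff[of Suc "{..<2*t}" f]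
    unfolding indexed_matching_def by simp
  moreover have "f 0 = y"
    by (simp add: f_def)
  ultimately have "inj_on f (fan_vertices t)"
    using \<open>y \<notin> g ` {..<2*t}\<close> image unfolding vertices by simp
  moreover have "f ` fan_vertices t \<subseteq> {..<n}"
    using image \<open>f 0 = y\<close> \<open>y < n\<close> \<open>g ` {..<2*t} \<subseteq> {..<n}\<close> unfolding vertices by simp
  moreover have "f ` e \<in> E" if "e \<in> fan_edges t" for e
  proof -
    obtain j where j: "j \<in> {1..t}" and "e \<in> {{0, 2*j-1}, {0, 2*j}, {2*j-1, 2*j}}"
      using \<open>e \<in> fan_edges t\<close> unfolding fan_edges_def by blast
    moreover obtain i where "j = Suc i"
      using j by (cases j) auto
    ultimately have "i < t" and "e \<in> {{0, Suc (2*i)}, {0, Suc (Suc (2*i))}, {Suc (2*i), Suc (Suc (2*i))}}"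
      by auto
    then show ?thesis
      using edge[OF \<open>i < t\<close>] by (auto simp: f_def)
  qed
  ultimately show ?thesis
    unfolding contains_subgraph_def by blast
qed

definition ball2 :: "('a \<Rightarrow> 'a set) \<Rightarrow> 'a \<Rightarrow> 'a set" where
  "ball2 C x = insert x (C x \<union> (\<Union>a\<in>C x. C a))"

lemma finite_ball2:
  assumes "\<And>a. finite (C a)"
  shows "finite (ball2 C x)"
  using assms unfolding ball2_def by auto

lemma card_ball2_le:
  assumes "\<And>a. finite (C a)" and "\<And>a. card (C a) \<le> m"
  shows "card (ball2 C x) \<le> 1 + m + m * m"
proof -
  have "card (\<Union>a\<in>C x. C a) \<le> (\<Sum>a\<in>C x. card (C a))"
    using assms(1) by (intro card_UN_le) auto
  also have "\<dots> \<le> card (C x) * m"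
    using sum_bounded_above[of "C x" "\<lambda>a. card (C a)" m] assms(2) by simp
  also have "\<dots> \<le> m * m"
    using assms(2) by simp
  finally have "card (\<Union>a\<in>C x. C a) \<le> m * m" .
  moreover have "card (ball2 C x) \<le> 1 + card (C x \<union> (\<Union>a\<in>C x. C a))"
    using assms(1) unfolding ball2_def by (simp add: card_insert_if)
  moreover have "card (C x \<union> (\<Union>a\<in>C x. C a)) \<le> card (C x) + card (\<Union>a\<in>C x. C a)"
    by (rule card_Un_le)
  ultimately show ?thesis
    using assms(2)[of x] by linarith
qed

lemma ex_ball2_superset:
  assumes "3 \<le> card S"
    and unique: "\<And>z p q. z \<in> S \<Longrightarrow> p \<in> S - insert z (C z) \<Longrightarrow> q \<in> S - insert z (C z) \<Longrightarrow> p = q"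
  shows "\<exists>x\<in>S. S \<subseteq> ball2 C x"
proof (rule ccontr)
  assume "\<not> (\<exists>x\<in>S. S \<subseteq> ball2 C x)"
  then have missed: "\<exists>w\<in>S. w \<noteq> x \<and> (\<forall>u\<in>S - {w}. w \<notin> C u)" if "x \<in> S" for x
  proof -
    obtain w where w: "w \<in> S" "w \<notin> ball2 C x"
      using \<open>\<not> (\<exists>x\<in>S. S \<subseteq> ball2 C x)\<close> \<open>x \<in> S\<close> by blast
    have "w \<notin> C u" if "u \<in> S - {w}" for u
    proof
      assume "w \<in> C u"
      then have "u \<notin> C x"
        using w(2) unfolding ball2_def by blast
      then show False
        using unique[OF \<open>x \<in> S\<close>, of u w] that w \<open>w \<in> C u\<close> unfolding ball2_def by blast
    qed
    then show ?thesis
      using w unfolding ball2_def by blast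
  qed
  \<comment> \<open>Two vertices missed in this way would both lie outside the cover of any third vertex.\<close>
  obtain x where "x \<in> S"
    using assms(1) by fastforce
  then obtain w where w: "w \<in> S" "\<forall>u\<in>S - {w}. w \<notin> C u"
    using missed by blast
  then obtain w' where w': "w' \<in> S" "w' \<noteq> w" "\<forall>u\<in>S - {w'}. w' \<notin> C u"
    using missed by blast
  have "\<not> S \<subseteq> {w, w'}"
  proof
    assume "S \<subseteq> {w, w'}"
    then have "card S \<le> card {w, w'}"
      by (rule card_mono[rotated]) simp
    then show False
      using assms(1) by (simp add: card_insert_if split: if_splits)
  qed
  then obtain u where "u \<in> S" "u \<noteq> w" "u \<noteq> w'"
    by blast
  then show False
    using unique[OF \<open>u \<in> S\<close>, of w w'] w w' by blast
qed

lemma clique_outside_link_cover_unique: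
  assumes clique: "\<forall>x\<in>S. \<forall>y\<in>S. x \<noteq> y \<longrightarrow> {x, y} \<in> E"
    and cover: "\<forall>e\<in>link E z. e \<inter> C \<noteq> {}"
    and "z \<in> S" "p \<in> S - insert z C" "q \<in> S - insert z C"
  shows "p = q"
proof (rule ccontr)
  assume "p \<noteq> q"
  have edge: "{x, y} \<in> E" if "x \<in> S" "y \<in> S" "x \<noteq> y" for x y
    using clique that by blast
  have "{p, q} \<in> E" "{z, p} \<in> E" "{z, q} \<in> E"
    using edge[of p q] edge[of z p] edge[of z q] \<open>p \<noteq> q\<close> assms(3-5) by auto
  then have "{p, q} \<in> link E z"
    unfolding link_def by auto
  then have "{p, q} \<inter> C \<noteq> {}"
    using cover by blast
  with assms(4,5) show False
    by simp
qed

lemma finite_simple_graph: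
  assumes "simple_graph_on n E"
  shows "finite E"
proof (rule finite_subset)
  show "E \<subseteq> Pow {..<n}"
    using assms unfolding simple_graph_on_def by blast
qed simp

lemma link_cover_of_fan_free:
  assumes "t \<ge> 1" and G: "simple_graph_on n E"
    and free: "\<not> contains_subgraph n E (fan_vertices t) (fan_edges t)"
  shows "\<exists>C. finite C \<and> card C \<le> 2 * (t - 1) \<and> (\<forall>e\<in>link E y. e \<inter> C \<noteq> {})"
proof -
  have "finite (link E y)" "\<forall>e\<in>link E y. card e = 2"
    using finite_simple_graph[OF G] G unfolding link_def simple_graph_on_def by auto
  from maximal_indexed_matching[OF this] obtain k g where g: "indexed_matching (link E y) k g"
    and cover: "\<forall>e\<in>link E y. e \<inter> g ` {..<2*k} \<noteq> {}"
    by blast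
  have "k < t"
  proof (rule ccontr)
    assume "\<not> k < t"
    then have "indexed_matching (link E y) t g"
      using g by (auto intro: indexed_matching_mono)
    then show False
      using fan_of_link_matching[OF \<open>t \<ge> 1\<close> G] free by blast
  qed
  then have "card (g ` {..<2*k}) \<le> 2 * (t - 1)"
    using card_image_le[of "{..<2*k}" g] by simp
  then show ?thesis
    using cover by (intro exI[of _ "g ` {..<2*k}"]) simp
qed

lemma num_Kr_le_of_fan_free:
  assumes "t \<ge> 1" and "r \<ge> 3" and G: "simple_graph_on n E"
    and free: "\<not> contains_subgraph n E (fan_vertices t) (fan_edges t)"
  shows "num_Kr r n E \<le> n * 2 ^ (1 + 2 * (t - 1) + 2 * (t - 1) * (2 * (t - 1)))"
proof -
  define m where "m = 2 * (t - 1)"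
  have "\<forall>y. \<exists>C. finite C \<and> card C \<le> m \<and> (\<forall>e\<in>link E y. e \<inter> C \<noteq> {})"
    using link_cover_of_fan_free[OF assms(1,3,4)] unfolding m_def by blast
  then obtain C where "\<forall>y. finite (C y) \<and> card (C y) \<le> m \<and> (\<forall>e\<in>link E y. e \<inter> C y \<noteq> {})"
    by (rule choice[THEN exE])
  then have fin: "\<And>y. finite (C y)" and card: "\<And>y. card (C y) \<le> m"
    and cover: "\<And>y. \<forall>e\<in>link E y. e \<inter> C y \<noteq> {}"
    by simp_all
  let ?cliques = "{S. S \<subseteq> {..<n} \<and> card S = r \<and> (\<forall>x\<in>S. \<forall>y\<in>S. x \<noteq> y \<longrightarrow> {x, y} \<in> E)}"
  have "?cliques \<subseteq> (\<Union>x<n. Pow (ball2 C x))"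
  proof
    fix S assume S: "S \<in> ?cliques"
    then have card_S: "3 \<le> card S" and clique: "\<forall>x\<in>S. \<forall>y\<in>S. x \<noteq> y \<longrightarrow> {x, y} \<in> E"
      using \<open>r \<ge> 3\<close> by simp_all
    have "\<exists>x\<in>S. S \<subseteq> ball2 C x"
      using card_S clique_outside_link_cover_unique[OF clique cover] by (rule ex_ball2_superset)
    then show "S \<in> (\<Union>x<n. Pow (ball2 C x))"
      using S by blast
  qed
  then have "num_Kr r n E \<le> card (\<Union>x<n. Pow (ball2 C x))"
    unfolding num_Kr_def using finite_ball2[OF fin] by (intro card_mono) auto
  also have "\<dots> \<le> (\<Sum>x<n. card (Pow (ball2 C x)))"
    by (rule card_UN_le) simp
  also have "\<dots> = (\<Sum>x<n. 2 ^ card (ball2 C x))"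
    using finite_ball2[OF fin] by (simp add: card_Pow)
  also have "\<dots> \<le> (\<Sum>x<n. 2 ^ (1 + m + m * m))"
    using card_ball2_le[OF fin card] by (intro sum_mono power_increasing) auto
  finally show ?thesis
    unfolding m_def by simp
qed

lemma empty_graph_fan_free:
  assumes "t \<ge> 1"
  shows "\<not> contains_subgraph n {} (fan_vertices t) (fan_edges t)"
proof -
  have "{0, 1} \<in> fan_edges t"
    using assms unfolding fan_edges_def by force
  then show ?thesis
    unfolding contains_subgraph_def by blast
qed

lemma ex_Kr_Ft_le:
  assumes "t \<ge> 1"
    and bound: "\<And>E. simple_graph_on n E \<Longrightarrow> \<not> contains_subgraph n E (fan_vertices t) (fan_edges t)
                  \<Longrightarrow> num_Kr r n E \<le> B"
  shows "ex_Kr_Ft n r t \<le> B"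
proof -
  let ?A = "{num_Kr r n E | E. simple_graph_on n E \<and> \<not> contains_subgraph n E (fan_vertices t) (fan_edges t)}"
  have "num_Kr r n {} \<in> ?A"
    using empty_graph_fan_free[OF assms(1)] unfolding simple_graph_on_def by blast
  moreover have "?A \<subseteq> {..B}"
    using bound by auto
  ultimately show ?thesis
    unfolding ex_Kr_Ft_def by (subst Max_le_iff) (auto intro: finite_subset)
qed

theorem proposition3:
  fixes t r :: nat
  assumes "t \<ge> 1" and "r \<ge> 3"
  shows "(\<lambda>n. real (ex_Kr_Ft n r t)) \<in> O(\<lambda>n. real n)"
proof
  define K :: nat where "K = 2 ^ (1 + 2 * (t - 1) + 2 * (t - 1) * (2 * (t - 1)))"
  have "ex_Kr_Ft n r t \<le> n * K" for n
    using assms num_Kr_le_of_fan_free unfolding K_def by (intro ex_Kr_Ft_le) auto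
  then have "norm (real (ex_Kr_Ft n r t)) \<le> real K * norm (real n)" for n
    by (metis mult.commute norm_of_nat of_nat_le_iff of_nat_mult)
  then show "\<forall>\<^sub>F n in at_top. norm (real (ex_Kr_Ft n r t)) \<le> real K * norm (real n)"
    by simp
qed

end
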